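(* For each $n$ let $\boldsymbol{M}\in\mathbb{R}^{n\times n}$ be a deterministic matrix with $\|\boldsymbol{M}\|_{\mathrm{op}}\le1$, and let $b=b_n$ satisfy $b=\omega(n^{-1/2})$. Let $\boldsymbol{w}=(w_1,\ldots,w_n)^\top$ and $\boldsymbol{\xi}=(\xi_1,\ldots,\xi_n)^\top$ be independent random vectors with i.i.d. entries from $\mathbb{P}_w$ and $\mathbb{P}_\xi$ respectively, where $\mathbb{P}_w\in\mathcal{D}_1\cup\mathcal{D}_2$ and $\mathbb{P}_\xi\in\mathcal{D}_2$ (not depending on $n$). Then for any fixed $\delta>0$, $$\lim_{n\to\infty}\mathbb{P}\Bigl(\frac{|\boldsymbol{w}^\top\boldsymbol{M}\boldsymbol{\xi}|}{b\|\boldsymbol{w}\|_2^2}>\delta\Bigr)=0.$$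
   Context: For $s>0$, $\mathcal{D}_s$ is the class of distributions of a random variable $\xi$ with $\mathbb{E}[\xi]=0$ and $1\le\mathbb{E}[|\xi|^s]\le2$. $b=\omega(n^{-1/2})$ means $n^{-1/2}/|b|\to0$. Convention: $a/0=\infty$. *)

theory Defs
  imports "HOL-Probability.Probability"
begin

definition distD :: "real \<Rightarrow> real measure \<Rightarrow> bool" where
  "distD s P \<longleftrightarrow> prob_space P \<and> sets P = sets borel \<and>
     integrable P (\<lambda>x. x) \<and> (\<integral>x. x \<partial>P) = 0 \<and>
     1 \<le> (\<integral>\<^sup>+x. ennreal (\<bar>x\<bar> powr s) \<partial>P) \<and>
     (\<integral>\<^sup>+x. ennreal (\<bar>x\<bar> powr s) \<partial>P) \<le> 2"

definition vnorm :: "nat \<Rightarrow> (nat \<Rightarrow> real) \<Rightarrow> real" where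
  "vnorm n x = sqrt (\<Sum>i<n. (x i)\<^sup>2)"

definition mvec :: "nat \<Rightarrow> (nat \<Rightarrow> nat \<Rightarrow> real) \<Rightarrow> (nat \<Rightarrow> real) \<Rightarrow> (nat \<Rightarrow> real)" where
  "mvec n M x = (\<lambda>i. \<Sum>j<n. M i j * x j)"

definition opnorm :: "nat \<Rightarrow> (nat \<Rightarrow> nat \<Rightarrow> real) \<Rightarrow> real" where
  "opnorm n M = Sup {vnorm n (mvec n M x) | x. vnorm n x \<le> 1}"

definition bilin :: "nat \<Rightarrow> (nat \<Rightarrow> real) \<Rightarrow> (nat \<Rightarrow> nat \<Rightarrow> real) \<Rightarrow> (nat \<Rightarrow> real) \<Rightarrow> real" where
  "bilin n w M xi = (\<Sum>i<n. \<Sum>j<n. w i * M i j * xi j)"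

text \<open>"a / d > delta" with the convention a / 0 = infinity.\<close>
definition ratio_gt :: "real \<Rightarrow> real \<Rightarrow> real \<Rightarrow> bool" where
  "ratio_gt a d delta \<longleftrightarrow> d = 0 \<or> a / d > delta"

end

(* Condition on w.  For fixed w, w^T M xi = <M^T w, xi> is a linear form in the centred
   i.i.d. entries of xi with variance at most E xi^2 |M^T w|^2 <= E xi^2 |w|^2, so by
   Chebyshev the conditional probability of the event is at most
   E xi^2 / (delta^2 b^2 |w|^2).  Since P_w is not a point mass at 0, |w_i| >= a with some
   probability q > 0; then |w|^2 >= a^2 #{i. |w_i| >= a}, and Chebyshev for this binomial
   count gives |w|^2 >= a^2 q n / 2 outside an event of probability 4 / (n q^2).  Hence
   the probability is O(1/n) + O(1/(n b^2)), which tends to 0 as b = omega(n^(-1/2)). *)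

theory Submission
  imports Defs
begin

section \<open>Euclidean and operator norms\<close>

lemma vnorm_nonneg: "0 \<le> vnorm n x"
  by (simp add: vnorm_def sum_nonneg)

lemma power2_vnorm: "(vnorm n x)\<^sup>2 = (\<Sum>i<n. (x i)\<^sup>2)"
  by (simp add: vnorm_def sum_nonneg)

lemma vnorm_eq_L2_set: "vnorm n x = L2_set x {..<n}"
  by (simp add: vnorm_def L2_set_def)

lemma vnorm_scale: "vnorm n (\<lambda>i. c * x i) = \<bar>c\<bar> * vnorm n x"
  by (simp add: vnorm_def power_mult_distrib real_sqrt_mult flip: sum_distrib_left)

lemma vnorm_eq_0_iff: "vnorm n x = 0 \<longleftrightarrow> (\<forall>i<n. x i = 0)"
  by (auto simp: vnorm_eq_L2_set L2_set_eq_0_iff)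

lemma abs_le_vnorm:
  assumes "j < n"
  shows "\<bar>x j\<bar> \<le> vnorm n x"
proof -
  have "(x j)\<^sup>2 \<le> (\<Sum>i<n. (x i)\<^sup>2)"
    using assms by (intro member_le_sum) auto
  then have "sqrt ((x j)\<^sup>2) \<le> vnorm n x"
    unfolding vnorm_def by (rule real_sqrt_le_mono)
  then show ?thesis by simp
qed

lemma sum_mult_le_vnorm: "(\<Sum>i<n. x i * y i) \<le> vnorm n x * vnorm n y"
proof -
  have "(\<Sum>i<n. x i * y i) \<le> (\<Sum>i<n. \<bar>x i\<bar> * \<bar>y i\<bar>)"
    by (intro sum_mono) (simp flip: abs_mult)
  also have "\<dots> \<le> vnorm n x * vnorm n y"
    unfolding vnorm_eq_L2_set by (rule L2_set_mult_ineq)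
  finally show ?thesis .
qed

lemma mvec_scale: "mvec n M (\<lambda>j. c * x j) = (\<lambda>i. c * mvec n M x i)"
  by (simp add: mvec_def sum_distrib_left mult_ac)

lemma bdd_above_mvec_unit_ball: "bdd_above {vnorm n (mvec n M x) | x. vnorm n x \<le> 1}"
proof (rule bdd_aboveI)
  fix y assume "y \<in> {vnorm n (mvec n M x) | x. vnorm n x \<le> 1}"
  then obtain x where x: "vnorm n x \<le> 1" and y: "y = vnorm n (mvec n M x)" by auto
  have "\<bar>mvec n M x i\<bar> \<le> (\<Sum>j<n. \<bar>M i j\<bar>)" for i
  proof -
    have "\<bar>mvec n M x i\<bar> \<le> (\<Sum>j<n. \<bar>M i j\<bar> * \<bar>x j\<bar>)"
      unfolding mvec_def abs_mult[symmetric] by (rule sum_abs)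
    also have "\<dots> \<le> (\<Sum>j<n. \<bar>M i j\<bar>)"
      using abs_le_vnorm[of _ n x] x by (intro sum_mono mult_left_le) (auto intro: order_trans)
    finally show ?thesis .
  qed
  then have "(\<Sum>i<n. \<bar>mvec n M x i\<bar>) \<le> (\<Sum>i<n. \<Sum>j<n. \<bar>M i j\<bar>)"
    by (intro sum_mono)
  moreover have "y \<le> (\<Sum>i<n. \<bar>mvec n M x i\<bar>)"
    unfolding y vnorm_eq_L2_set by (rule L2_set_le_sum_abs)
  ultimately show "y \<le> (\<Sum>i<n. \<Sum>j<n. \<bar>M i j\<bar>)" by linarith
qed

lemma vnorm_mvec_le_opnorm: "vnorm n x \<le> 1 \<Longrightarrow> vnorm n (mvec n M x) \<le> opnorm n M"
  unfolding opnorm_def by (intro cSup_upper bdd_above_mvec_unit_ball) auto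

lemma opnorm_nonneg: "0 \<le> opnorm n M"
  using vnorm_mvec_le_opnorm[of n "\<lambda>_. 0" M] by (simp add: vnorm_def mvec_def)

lemma vnorm_mvec_le: "vnorm n (mvec n M x) \<le> opnorm n M * vnorm n x"
proof (cases "vnorm n x = 0")
  case True
  then have "mvec n M x = (\<lambda>_. 0)"
    by (simp add: vnorm_eq_0_iff mvec_def)
  then show ?thesis
    using True by (simp add: vnorm_def)
next
  case False
  define r where "r = vnorm n x"
  have r: "r > 0" using False vnorm_nonneg[of n x] by (simp add: r_def)
  have "vnorm n (\<lambda>j. (1 / r) * x j) = 1"
    using r vnorm_scale[of n "1 / r" x] by (simp add: r_def)
  then have "vnorm n (mvec n M (\<lambda>j. (1 / r) * x j)) \<le> opnorm n M"
    by (intro vnorm_mvec_le_opnorm) simp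
  then have "vnorm n (mvec n M x) / r \<le> opnorm n M"
    unfolding mvec_scale vnorm_scale using r by simp
  then show ?thesis
    using r by (simp add: r_def field_simps)
qed

lemma vnorm_mvec_transpose_le: "vnorm n (mvec n (\<lambda>i j. M j i) w) \<le> opnorm n M * vnorm n w"
proof -
  define v where "v = mvec n (\<lambda>i j. M j i) w"
  have "(vnorm n v)\<^sup>2 = (\<Sum>j<n. (\<Sum>i<n. M i j * w i) * v j)"
    unfolding power2_vnorm by (simp add: power2_eq_square v_def mvec_def)
  also have "\<dots> = (\<Sum>j<n. \<Sum>i<n. w i * (M i j * v j))"
    by (simp add: sum_distrib_left sum_distrib_right mult_ac)
  also have "\<dots> = (\<Sum>i<n. \<Sum>j<n. w i * (M i j * v j))"
    by (rule sum.swap)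
  also have "\<dots> = (\<Sum>i<n. w i * mvec n M v i)"
    by (simp add: mvec_def sum_distrib_left)
  also have "\<dots> \<le> vnorm n w * vnorm n (mvec n M v)"
    by (rule sum_mult_le_vnorm)
  also have "\<dots> \<le> vnorm n w * (opnorm n M * vnorm n v)"
    by (intro mult_left_mono vnorm_mvec_le vnorm_nonneg)
  finally have le: "vnorm n v * vnorm n v \<le> (opnorm n M * vnorm n w) * vnorm n v"
    by (simp add: power2_eq_square mult_ac)
  have "vnorm n v \<le> opnorm n M * vnorm n w"
  proof (cases "vnorm n v = 0")
    case True
    then show ?thesis using opnorm_nonneg vnorm_nonneg by simp
  next
    case False
    then have "0 < vnorm n v" using vnorm_nonneg[of n v] by linarith
    with le show ?thesis by (rule mult_right_le_imp_le)
  qed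
  then show ?thesis by (simp add: v_def)
qed

lemma bilin_eq_transpose: "bilin n w M xi = (\<Sum>j<n. mvec n (\<lambda>i j. M j i) w j * xi j)"
  unfolding bilin_def mvec_def
  by (subst sum.swap) (simp add: sum_distrib_left mult_ac)

section \<open>Tail bounds for product measures\<close>

lemma finite_product_prob_spaceI:
  assumes "\<And>i. prob_space (M i)" and "finite I"
  shows "finite_product_prob_space M I"
  using assms
  by (intro finite_product_prob_space.intro finite_product_sigma_finite.intro
      finite_product_sigma_finite_axioms.intro product_prob_spaceI)
    (auto simp: product_prob_space_def product_sigma_finite_def prob_space_imp_sigma_finite)

context finite_product_prob_space
begin

lemma
  fixes f :: "_ \<Rightarrow> real"
  assumes "i \<in> I" and "integrable (M i) f"
  shows integrable_PiM_component: "integrable (PiM I M) (\<lambda>x. f (x i))"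
    and integral_PiM_component: "(\<integral>x. f (x i) \<partial>PiM I M) = integral\<^sup>L (M i) f"
proof -
  define F where "F k = (if k = i then f else (\<lambda>_. 1))" for k
  have F: "integrable (M k) (F k)" for k
    using assms by (simp add: F_def)
  have "(\<Prod>k\<in>I. F k (x k)) = f (x i)" for x
    using assms finite_index by (subst prod.mono_neutral_right[of I "{i}"]) (auto simp: F_def)
  moreover have "(\<Prod>k\<in>I. integral\<^sup>L (M k) (F k)) = integral\<^sup>L (M i) f"
    using assms finite_index
    by (subst prod.mono_neutral_right[of I "{i}"]) (auto simp: F_def M.prob_space)
  ultimately show "integrable (PiM I M) (\<lambda>x. f (x i))" "(\<integral>x. f (x i) \<partial>PiM I M) = integral\<^sup>L (M i) f"
    using product_integrable_prod[OF finite_index F] product_integral_prod[OF finite_index F] by simp_all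
qed

lemma
  fixes f g :: "_ \<Rightarrow> real"
  assumes "i \<in> I" "j \<in> I" "i \<noteq> j" and "integrable (M i) f" "integrable (M j) g"
  shows integrable_PiM_component_mult: "integrable (PiM I M) (\<lambda>x. f (x i) * g (x j))"
    and integral_PiM_component_mult:
      "(\<integral>x. f (x i) * g (x j) \<partial>PiM I M) = integral\<^sup>L (M i) f * integral\<^sup>L (M j) g"
proof -
  define F where "F k = (if k = i then f else if k = j then g else (\<lambda>_. 1))" for k
  have F: "integrable (M k) (F k)" for k
    using assms by (simp add: F_def)
  have "(\<Prod>k\<in>I. F k (x k)) = f (x i) * g (x j)" for x
    using assms finite_index by (subst prod.mono_neutral_right[of I "{i, j}"]) (auto simp: F_def)
  moreover have "(\<Prod>k\<in>I. integral\<^sup>L (M k) (F k)) = integral\<^sup>L (M i) f * integral\<^sup>L (M j) g"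
    using assms finite_index
    by (subst prod.mono_neutral_right[of I "{i, j}"]) (auto simp: F_def M.prob_space)
  ultimately show "integrable (PiM I M) (\<lambda>x. f (x i) * g (x j))"
      "(\<integral>x. f (x i) * g (x j) \<partial>PiM I M) = integral\<^sup>L (M i) f * integral\<^sup>L (M j) g"
    using product_integrable_prod[OF finite_index F] product_integral_prod[OF finite_index F] by simp_all
qed

lemma
  fixes g :: "_ \<Rightarrow> _ \<Rightarrow> real"
  assumes g: "\<And>i. i \<in> I \<Longrightarrow> integrable (M i) (g i)"
    and g2: "\<And>i. i \<in> I \<Longrightarrow> integrable (M i) (\<lambda>t. (g i t)\<^sup>2)"
    and centered: "\<And>i. i \<in> I \<Longrightarrow> integral\<^sup>L (M i) (g i) = 0"
  shows integrable_PiM_sum_square: "integrable (PiM I M) (\<lambda>x. (\<Sum>i\<in>I. g i (x i))\<^sup>2)"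
    and integral_PiM_sum_square:
      "(\<integral>x. (\<Sum>i\<in>I. g i (x i))\<^sup>2 \<partial>PiM I M) = (\<Sum>i\<in>I. \<integral>t. (g i t)\<^sup>2 \<partial>M i)"
proof -
  have expand: "(\<Sum>i\<in>I. g i (x i))\<^sup>2 = (\<Sum>i\<in>I. \<Sum>j\<in>I. g i (x i) * g j (x j))" for x
    by (simp add: power2_eq_square sum_product)
  have cross: "integrable (PiM I M) (\<lambda>x. g i (x i) * g j (x j)) \<and>
      (\<integral>x. g i (x i) * g j (x j) \<partial>PiM I M) = (if i = j then \<integral>t. (g i t)\<^sup>2 \<partial>M i else 0)"
    if "i \<in> I" "j \<in> I" for i j
  proof (cases "i = j")
    case True
    then show ?thesis
      using integrable_PiM_component[OF that(1) g2[OF that(1)]]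
        integral_PiM_component[OF that(1) g2[OF that(1)]]
      by (simp add: power2_eq_square)
  next
    case False
    then show ?thesis
      using that g centered integrable_PiM_component_mult integral_PiM_component_mult by simp
  qed
  show "integrable (PiM I M) (\<lambda>x. (\<Sum>i\<in>I. g i (x i))\<^sup>2)"
    unfolding expand using cross by (intro Bochner_Integration.integrable_sum) auto
  have "(\<integral>x. (\<Sum>i\<in>I. g i (x i))\<^sup>2 \<partial>PiM I M)
      = (\<Sum>i\<in>I. \<Sum>j\<in>I. \<integral>x. g i (x i) * g j (x j) \<partial>PiM I M)"
    unfolding expand using cross
    by (simp add: Bochner_Integration.integral_sum Bochner_Integration.integrable_sum)
  also have "\<dots> = (\<Sum>i\<in>I. \<integral>t. (g i t)\<^sup>2 \<partial>M i)"
    using cross finite_index by (simp add: sum.delta sum.delta')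
  finally show "(\<integral>x. (\<Sum>i\<in>I. g i (x i))\<^sup>2 \<partial>PiM I M) = (\<Sum>i\<in>I. \<integral>t. (g i t)\<^sup>2 \<partial>M i)" .
qed

lemma measure_PiM_sum_tail_le:
  fixes g :: "_ \<Rightarrow> _ \<Rightarrow> real"
  assumes "\<And>i. i \<in> I \<Longrightarrow> integrable (M i) (g i)"
    and "\<And>i. i \<in> I \<Longrightarrow> integrable (M i) (\<lambda>t. (g i t)\<^sup>2)"
    and "\<And>i. i \<in> I \<Longrightarrow> integral\<^sup>L (M i) (g i) = 0"
    and "0 < t"
  shows "measure (PiM I M) {x \<in> space (PiM I M). t \<le> \<bar>\<Sum>i\<in>I. g i (x i)\<bar>}
    \<le> (\<Sum>i\<in>I. \<integral>s. (g i s)\<^sup>2 \<partial>M i) / t\<^sup>2"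
proof -
  have "(\<lambda>x. \<Sum>i\<in>I. g i (x i)) \<in> borel_measurable (PiM I M)"
    using assms(1) by (intro borel_measurable_sum measurable_compose[OF measurable_component_singleton])
      auto
  then have "measure (PiM I M) {x \<in> space (PiM I M). t \<le> \<bar>\<Sum>i\<in>I. g i (x i)\<bar>}
      \<le> (\<integral>x. (\<Sum>i\<in>I. g i (x i))\<^sup>2 \<partial>PiM I M) / t\<^sup>2"
    using assms by (intro second_moment_method integrable_PiM_sum_square) auto
  also have "\<dots> = (\<Sum>i\<in>I. \<integral>s. (g i s)\<^sup>2 \<partial>M i) / t\<^sup>2"
    using assms by (simp add: integral_PiM_sum_square)
  finally show ?thesis .
qed

end

lemma measure_PiM_count_lower_tail:
  fixes P :: "'a measure" and A :: "'a set" and q :: real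
  defines "q \<equiv> measure P A"
  assumes P: "prob_space P" and "finite I" and A: "A \<in> sets P" and "0 < q"
  shows "measure (PiM I (\<lambda>_. P)) {w \<in> space (PiM I (\<lambda>_. P)). (\<Sum>i\<in>I. indicator A (w i)) < card I * q / 2}
    \<le> 4 / (card I * q\<^sup>2)"
proof (cases "I = {}")
  case True
  then show ?thesis by simp
next
  case False
  interpret coord: prob_space P by fact
  interpret finite_product_prob_space "\<lambda>_. P" I
    using P \<open>finite I\<close> by (intro finite_product_prob_spaceI)
  define g where "g = (\<lambda>t. indicator A t - q)"
  have g_bound: "\<bar>g t\<bar> \<le> 1" for t
    using \<open>0 < q\<close> coord.prob_le_1[of A] by (auto simp: g_def q_def indicator_def)
  have g_meas[measurable]: "g \<in> borel_measurable P"
    unfolding g_def using A by (intro borel_measurable_diff borel_measurable_indicator) simp_all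
  have g_int: "integrable P g" and g2_int: "integrable P (\<lambda>t. (g t)\<^sup>2)"
    using g_bound g_meas by (auto intro!: coord.integrable_const_bound[where B = 1] simp: abs_square_le_1)
  have g_centered: "integral\<^sup>L P g = 0"
    using A unfolding g_def q_def
    by (subst Bochner_Integration.integral_diff)
      (auto simp: integrable_indicator_iff coord.emeasure_finite less_top[symmetric] coord.prob_space)
  have g2_le: "(\<integral>t. (g t)\<^sup>2 \<partial>P) \<le> 1"
  proof -
    have "(\<integral>t. (g t)\<^sup>2 \<partial>P) \<le> (\<integral>t. 1 \<partial>P)"
      using g2_int g_bound by (intro integral_mono) (auto simp: abs_square_le_1)
    then show ?thesis by (simp add: coord.prob_space)
  qed
  have n: "0 < real (card I)"
    using False \<open>finite I\<close> by (simp add: card_gt_0_iff)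
  have "{w \<in> space (PiM I (\<lambda>_. P)). (\<Sum>i\<in>I. indicator A (w i)) < card I * q / 2}
      \<subseteq> {w \<in> space (PiM I (\<lambda>_. P)). card I * q / 2 \<le> \<bar>\<Sum>i\<in>I. g (w i)\<bar>}"
    by (auto simp: g_def sum_subtractf abs_if mult.commute)
  then have "measure (PiM I (\<lambda>_. P)) {w \<in> space (PiM I (\<lambda>_. P)). (\<Sum>i\<in>I. indicator A (w i)) < card I * q / 2}
      \<le> measure (PiM I (\<lambda>_. P)) {w \<in> space (PiM I (\<lambda>_. P)). card I * q / 2 \<le> \<bar>\<Sum>i\<in>I. g (w i)\<bar>}"
    by (intro finite_measure_mono) measurable
  also have "\<dots> \<le> (\<Sum>i\<in>I. \<integral>t. (g t)\<^sup>2 \<partial>P) / (card I * q / 2)\<^sup>2"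
    using g_int g2_int g_centered n \<open>0 < q\<close> by (intro measure_PiM_sum_tail_le) auto
  also have "\<dots> \<le> card I / (card I * q / 2)\<^sup>2"
    using g2_le by (intro divide_right_mono) (simp_all add: mult_left_le)
  also have "\<dots> = 4 / (card I * q\<^sup>2)"
    using n \<open>0 < q\<close> by (simp add: field_simps power2_eq_square)
  finally show ?thesis .
qed

lemma measure_PiM_linear_form_tail:
  fixes P :: "real measure"
  assumes P: "prob_space P" and "finite I"
    and "integrable P (\<lambda>x. x)" "integrable P (\<lambda>x. x\<^sup>2)" "integral\<^sup>L P (\<lambda>x. x) = 0"
    and "0 < t"
  shows "measure (PiM I (\<lambda>_. P)) {\<xi> \<in> space (PiM I (\<lambda>_. P)). t \<le> \<bar>\<Sum>j\<in>I. v j * \<xi> j\<bar>}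
    \<le> (\<Sum>j\<in>I. (v j)\<^sup>2) * (\<integral>x. x\<^sup>2 \<partial>P) / t\<^sup>2"
proof -
  interpret finite_product_prob_space "\<lambda>_. P" I
    using P \<open>finite I\<close> by (intro finite_product_prob_spaceI)
  have "measure (PiM I (\<lambda>_. P)) {\<xi> \<in> space (PiM I (\<lambda>_. P)). t \<le> \<bar>\<Sum>j\<in>I. v j * \<xi> j\<bar>}
      \<le> (\<Sum>j\<in>I. \<integral>x. (v j * x)\<^sup>2 \<partial>P) / t\<^sup>2"
    using assms by (intro measure_PiM_sum_tail_le[where g = "\<lambda>j x. v j * x"]) (auto simp: power_mult_distrib)
  also have "\<dots> = (\<Sum>j\<in>I. (v j)\<^sup>2) * (\<integral>x. x\<^sup>2 \<partial>P) / t\<^sup>2"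
    by (simp add: power_mult_distrib sum_distrib_right)
  finally show ?thesis .
qed

lemma (in pair_prob_space) measure_le_of_sections:
  assumes A: "A \<in> sets (M1 \<Otimes>\<^sub>M M2)" and S: "S \<in> sets M1" and "0 \<le> K"
    and sections: "\<And>x. x \<in> space M1 - S \<Longrightarrow> measure M2 (Pair x -` A) \<le> K"
  shows "measure (M1 \<Otimes>\<^sub>M M2) A \<le> measure M1 S + K"
proof -
  have "emeasure M2 (Pair x -` A) \<le> ennreal (indicator S x) + ennreal K" if "x \<in> space M1" for x
  proof (cases "x \<in> S")
    case True
    then show ?thesis
      using M2.emeasure_le_1[of "Pair x -` A"] \<open>0 \<le> K\<close>
      by (simp add: order_trans[OF _ add_increasing2])
  next
    case False
    then show ?thesis
      using that sections[of x] by (simp add: M2.emeasure_eq_measure ennreal_leI)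
  qed
  then have "emeasure (M1 \<Otimes>\<^sub>M M2) A \<le> (\<integral>\<^sup>+x. ennreal (indicator S x) + ennreal K \<partial>M1)"
    unfolding M2.emeasure_pair_measure_alt[OF A] by (intro nn_integral_mono) simp
  also have "\<dots> = ennreal (measure M1 S + K)"
    using S \<open>0 \<le> K\<close>
    by (simp add: nn_integral_add ennreal_indicator M1.emeasure_eq_measure M1.prob_space ennreal_plus)
  finally show ?thesis
    using \<open>0 \<le> K\<close> by (simp add: emeasure_eq_measure ennreal_le_iff del: ennreal_plus)
qed

section \<open>The bilinear form\<close>

lemma distD_integrable_square:
  assumes "distD 2 P"
  shows "integrable P (\<lambda>x. x\<^sup>2)"
proof (rule integrableI_nonneg)
  have sets: "sets P = sets borel"
    using assms by (simp add: distD_def)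
  show "(\<lambda>x. x\<^sup>2) \<in> borel_measurable P"
    by (simp add: measurable_cong_sets[OF sets refl])
  have "(\<integral>\<^sup>+x. ennreal (x\<^sup>2) \<partial>P) = (\<integral>\<^sup>+x. ennreal (\<bar>x\<bar> powr 2) \<partial>P)"
    by (simp add: powr_numeral)
  also have "\<dots> \<le> 2"
    using assms by (simp add: distD_def)
  finally show "(\<integral>\<^sup>+x. ennreal (x\<^sup>2) \<partial>P) < \<infinity>"
    by (simp add: le_less_trans)
qed simp

lemma distD_mass_away_from_zero:
  assumes "distD s P"
  obtains a where "0 < a" and "0 < measure P {t. a \<le> \<bar>t\<bar>}"
proof (rule ccontr)
  assume no_mass: "\<not> thesis"
  interpret prob_space P
    using assms by (simp add: distD_def)
  have sets: "sets P = sets borel"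
    using assms by (simp add: distD_def)
  have "AE t in P. \<bar>t\<bar> < 1 / Suc k" for k
  proof (rule AE_I')
    let ?N = "{t :: real. 1 / Suc k \<le> \<bar>t\<bar>}"
    have "?N \<in> sets P"
      unfolding sets by measurable
    moreover have "\<not> 0 < measure P ?N"
      using no_mass that[of "1 / Suc k"] by auto
    then have "measure P ?N = 0"
      using measure_nonneg[of P ?N] by linarith
    ultimately show "?N \<in> null_sets P"
      by (simp add: null_sets_def emeasure_eq_measure)
  qed (auto simp: not_less)
  then have small: "AE t in P. \<forall>k. \<bar>t\<bar> < 1 / Suc k"
    by (simp add: AE_all_countable)
  have zero: "t = 0" if "\<forall>k. \<bar>t\<bar> < 1 / Suc k" for t :: real
  proof (rule ccontr)
    assume "t \<noteq> 0"
    then obtain k where "1 / Suc k < \<bar>t\<bar>"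
      using reals_Archimedean[of "\<bar>t\<bar>"] by (auto simp: field_simps)
    with that show False by (meson not_less_iff_gr_or_eq order.strict_trans)
  qed
  from small have "AE t in P. t = 0"
    by (rule eventually_mono) (rule zero)
  then have "(\<integral>\<^sup>+x. ennreal (\<bar>x\<bar> powr s) \<partial>P) = 0"
    by (subst nn_integral_cong_AE[where v = "\<lambda>_. 0"]) auto
  then show False
    using assms by (simp add: distD_def)
qed

lemma ratio_gt_imp_less:
  assumes "ratio_gt a d \<delta>" and "d \<noteq> 0" and "0 \<le> a" and "0 < \<delta>"
  shows "\<delta> * \<bar>d\<bar> < a"
proof -
  have "\<delta> < a / d"
    using assms(1,2) by (simp add: ratio_gt_def)
  moreover have "0 < d"
    using calculation assms(2-4) by (metis divide_nonneg_neg leD less_trans linorder_neqE)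
  ultimately show ?thesis
    by (simp add: field_simps)
qed

lemma measure_PiM_vnorm_lower_tail:
  fixes P :: "real measure" and a q :: real
  defines "q \<equiv> measure P {t. a \<le> \<bar>t\<bar>}"
  assumes P: "prob_space P" and [measurable_cong]: "sets P = sets borel" and "0 < a" "0 < q"
  shows "measure (PiM {..<n} (\<lambda>_. P)) {w \<in> space (PiM {..<n} (\<lambda>_. P)). (vnorm n w)\<^sup>2 < a\<^sup>2 * q / 2 * n}
    \<le> 4 / (n * q\<^sup>2)"
proof -
  let ?W = "PiM {..<n} (\<lambda>_. P)"
  let ?count = "\<lambda>w. \<Sum>i<n. indicator {t. a \<le> \<bar>t\<bar>} (w i) :: real"
  interpret prob_space ?W
    using P by (rule prob_space_PiM)
  have "{w \<in> space ?W. (vnorm n w)\<^sup>2 < a\<^sup>2 * q / 2 * n} \<subseteq> {w \<in> space ?W. ?count w < card {..<n} * q / 2}"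
  proof safe
    fix w assume small: "(vnorm n w)\<^sup>2 < a\<^sup>2 * q / 2 * n"
    have "a\<^sup>2 * ?count w \<le> (vnorm n w)\<^sup>2"
      unfolding power2_vnorm sum_distrib_left
      using \<open>0 < a\<close> by (intro sum_mono) (auto simp: indicator_def simp flip: abs_le_square_iff)
    moreover have "a\<^sup>2 * q / 2 * n = a\<^sup>2 * (card {..<n} * q / 2)"
      by simp
    ultimately have "a\<^sup>2 * ?count w < a\<^sup>2 * (card {..<n} * q / 2)"
      using small by linarith
    then show "?count w < card {..<n} * q / 2"
      using \<open>0 < a\<close> by simp
  qed
  then have "measure ?W {w \<in> space ?W. (vnorm n w)\<^sup>2 < a\<^sup>2 * q / 2 * n}
      \<le> measure ?W {w \<in> space ?W. ?count w < card {..<n} * q / 2}"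
    by (intro finite_measure_mono) measurable
  also have "\<dots> \<le> 4 / (card {..<n} * q\<^sup>2)"
    using P \<open>0 < q\<close> unfolding q_def by (intro measure_PiM_count_lower_tail) simp_all
  finally show ?thesis
    by simp
qed

lemma measure_PiM_bilin_ratio_gt_le:
  fixes P :: "real measure" and M :: "nat \<Rightarrow> nat \<Rightarrow> real"
  assumes P: "prob_space P" and [measurable_cong]: "sets P = sets borel"
    and moments: "integrable P (\<lambda>x. x)" "integrable P (\<lambda>x. x\<^sup>2)" "integral\<^sup>L P (\<lambda>x. x) = 0"
    and M: "opnorm n M \<le> 1" and "0 < \<delta>" and nonzero: "\<beta> * (vnorm n w)\<^sup>2 \<noteq> 0"
  shows "measure (PiM {..<n} (\<lambda>_. P))
      {\<xi> \<in> space (PiM {..<n} (\<lambda>_. P)). ratio_gt \<bar>bilin n w M \<xi>\<bar> (\<beta> * (vnorm n w)\<^sup>2) \<delta>}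
    \<le> (\<integral>x. x\<^sup>2 \<partial>P) / (\<delta>\<^sup>2 * \<beta>\<^sup>2 * (vnorm n w)\<^sup>2)"
proof -
  let ?X = "PiM {..<n} (\<lambda>_. P)"
  interpret prob_space ?X
    using P by (rule prob_space_PiM)
  define v where "v = mvec n (\<lambda>i j. M j i) w"
  define t where "t = \<delta> * \<bar>\<beta> * (vnorm n w)\<^sup>2\<bar>"
  have "0 < t"
    using \<open>0 < \<delta>\<close> nonzero by (simp add: t_def)
  have "{\<xi> \<in> space ?X. ratio_gt \<bar>bilin n w M \<xi>\<bar> (\<beta> * (vnorm n w)\<^sup>2) \<delta>}
      \<subseteq> {\<xi> \<in> space ?X. t \<le> \<bar>\<Sum>j<n. v j * \<xi> j\<bar>}"
    using ratio_gt_imp_less[OF _ nonzero _ \<open>0 < \<delta>\<close>]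
    by (force simp: t_def v_def bilin_eq_transpose)
  then have "measure ?X {\<xi> \<in> space ?X. ratio_gt \<bar>bilin n w M \<xi>\<bar> (\<beta> * (vnorm n w)\<^sup>2) \<delta>}
      \<le> measure ?X {\<xi> \<in> space ?X. t \<le> \<bar>\<Sum>j<n. v j * \<xi> j\<bar>}"
    by (intro finite_measure_mono) measurable
  also have "\<dots> \<le> (\<Sum>j<n. (v j)\<^sup>2) * (\<integral>x. x\<^sup>2 \<partial>P) / t\<^sup>2"
    using P moments \<open>0 < t\<close> by (intro measure_PiM_linear_form_tail) simp_all
  also have "\<dots> \<le> (vnorm n w)\<^sup>2 * (\<integral>x. x\<^sup>2 \<partial>P) / t\<^sup>2"
  proof -
    have "vnorm n v \<le> vnorm n w"
      using vnorm_mvec_transpose_le[of n M w] M vnorm_nonneg[of n w] unfolding v_def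
      by (meson mult_left_le_one_le opnorm_nonneg order_trans)
    then have "(\<Sum>j<n. (v j)\<^sup>2) \<le> (vnorm n w)\<^sup>2"
      unfolding power2_vnorm[symmetric] by (intro power_mono vnorm_nonneg)
    then show ?thesis
      by (intro divide_right_mono mult_right_mono) (simp_all add: integral_nonneg)
  qed
  also have "\<dots> = (\<integral>x. x\<^sup>2 \<partial>P) / (\<delta>\<^sup>2 * \<beta>\<^sup>2 * (vnorm n w)\<^sup>2)"
    using nonzero \<open>0 < \<delta>\<close> by (simp add: t_def field_simps power2_eq_square abs_mult)
  finally show ?thesis .
qed

lemma measure_bilin_ratio_gt_le:
  fixes Pw Pxi :: "real measure" and M :: "nat \<Rightarrow> nat \<Rightarrow> real" and a q :: real
  defines "q \<equiv> measure Pw {t. a \<le> \<bar>t\<bar>}"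
  assumes Pw: "prob_space Pw" and sets_Pw[measurable_cong]: "sets Pw = sets borel"
    and "0 < a" "0 < q"
    and Pxi: "prob_space Pxi" and sets_Pxi[measurable_cong]: "sets Pxi = sets borel"
    and Pxi_moments: "integrable Pxi (\<lambda>x. x)" "integrable Pxi (\<lambda>x. x\<^sup>2)" "integral\<^sup>L Pxi (\<lambda>x. x) = 0"
    and M: "opnorm n M \<le> 1" and "\<beta> \<noteq> 0" "0 < \<delta>" "0 < n"
  shows "measure (PiM {..<n} (\<lambda>_. Pw) \<Otimes>\<^sub>M PiM {..<n} (\<lambda>_. Pxi))
      {(w, \<xi>) \<in> space (PiM {..<n} (\<lambda>_. Pw) \<Otimes>\<^sub>M PiM {..<n} (\<lambda>_. Pxi)).
        ratio_gt \<bar>bilin n w M \<xi>\<bar> (\<beta> * (vnorm n w)\<^sup>2) \<delta>}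
    \<le> 4 / (n * q\<^sup>2) + 2 * (\<integral>x. x\<^sup>2 \<partial>Pxi) / (\<delta>\<^sup>2 * a\<^sup>2 * q) / (n * \<beta>\<^sup>2)"
proof -
  define W where "W = PiM {..<n} (\<lambda>_. Pw)"
  define X where "X = PiM {..<n} (\<lambda>_. Pxi)"
  define E where "E = {p \<in> space (W \<Otimes>\<^sub>M X).
    ratio_gt \<bar>bilin n (fst p) M (snd p)\<bar> (\<beta> * (vnorm n (fst p))\<^sup>2) \<delta>}"
  define c where "c = a\<^sup>2 * q / 2"
  define S where "S = {w \<in> space W. (vnorm n w)\<^sup>2 < c * n}"
  define K where "K = 2 * (\<integral>x. x\<^sup>2 \<partial>Pxi) / (\<delta>\<^sup>2 * a\<^sup>2 * q) / (n * \<beta>\<^sup>2)"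
  interpret pair_prob_space W X
    unfolding W_def X_def using Pw Pxi
    by (simp add: pair_prob_space_def pair_sigma_finite_def prob_space_imp_sigma_finite prob_space_PiM)
  have E: "E \<in> sets (W \<Otimes>\<^sub>M X)"
    unfolding E_def W_def X_def ratio_gt_def bilin_def vnorm_def by measurable
  have S: "S \<in> sets W"
    unfolding S_def W_def vnorm_def by measurable
  have small_norm: "measure W S \<le> 4 / (n * q\<^sup>2)"
    unfolding S_def W_def c_def using Pw sets_Pw \<open>0 < a\<close> \<open>0 < q\<close>
    unfolding q_def by (intro measure_PiM_vnorm_lower_tail) simp_all
  have sections: "measure X (Pair w -` E) \<le> K" if "w \<in> space W - S" for w
  proof -
    have large: "c * n \<le> (vnorm n w)\<^sup>2"
      using that by (simp add: S_def not_less)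
    moreover have "0 < c * n"
      using \<open>0 < a\<close> \<open>0 < q\<close> \<open>0 < n\<close> by (simp add: c_def)
    ultimately have "0 < (vnorm n w)\<^sup>2"
      by linarith
    have "Pair w -` E = {\<xi> \<in> space X. ratio_gt \<bar>bilin n w M \<xi>\<bar> (\<beta> * (vnorm n w)\<^sup>2) \<delta>}"
      using that by (auto simp: E_def space_pair_measure)
    also have "measure X \<dots> \<le> (\<integral>x. x\<^sup>2 \<partial>Pxi) / (\<delta>\<^sup>2 * \<beta>\<^sup>2 * (vnorm n w)\<^sup>2)"
      unfolding X_def using Pxi sets_Pxi Pxi_moments M \<open>0 < \<delta>\<close> \<open>\<beta> \<noteq> 0\<close> \<open>0 < (vnorm n w)\<^sup>2\<close>
      by (intro measure_PiM_bilin_ratio_gt_le) simp_all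
    also have "\<dots> \<le> (\<integral>x. x\<^sup>2 \<partial>Pxi) / (\<delta>\<^sup>2 * \<beta>\<^sup>2 * (c * n))"
      using large \<open>0 < c * n\<close> \<open>0 < \<delta>\<close> \<open>\<beta> \<noteq> 0\<close>
      by (intro frac_le mult_left_mono integral_nonneg) simp_all
    also have "\<dots> = K"
      by (simp add: K_def c_def field_simps)
    finally show ?thesis .
  qed
  have "0 \<le> K"
    unfolding K_def using \<open>0 < q\<close> by (intro divide_nonneg_nonneg mult_nonneg_nonneg integral_nonneg) auto
  with small_norm measure_le_of_sections[OF E S _ sections]
  have "measure (W \<Otimes>\<^sub>M X) E \<le> 4 / (n * q\<^sup>2) + K"
    by fastforce
  moreover have "{(w, \<xi>) \<in> space (W \<Otimes>\<^sub>M X). ratio_gt \<bar>bilin n w M \<xi>\<bar> (\<beta> * (vnorm n w)\<^sup>2) \<delta>} = E"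
    by (auto simp: E_def)
  ultimately show ?thesis
    by (simp add: W_def X_def K_def)
qed

theorem lemmaA3:
  fixes M :: "nat \<Rightarrow> nat \<Rightarrow> nat \<Rightarrow> real"
    and b :: "nat \<Rightarrow> real"
    and Pw Pxi :: "real measure"
    and \<delta> :: real
  assumes M_op: "\<And>n. opnorm n (M n) \<le> 1"
    and b_nz: "eventually (\<lambda>n. b n \<noteq> 0) sequentially"
    and b_omega: "((\<lambda>n. (1 / sqrt (real n)) / \<bar>b n\<bar>) \<longlongrightarrow> 0) sequentially"
    and Pw_D: "distD 1 Pw \<or> distD 2 Pw"
    and Pxi_D: "distD 2 Pxi"
    and delta_pos: "\<delta> > 0"
  shows "((\<lambda>n. measure (PiM {..<n} (\<lambda>_. Pw) \<Otimes>\<^sub>M PiM {..<n} (\<lambda>_. Pxi))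
            {(w, xi) \<in> space (PiM {..<n} (\<lambda>_. Pw) \<Otimes>\<^sub>M PiM {..<n} (\<lambda>_. Pxi)).
              ratio_gt \<bar>bilin n w (M n) xi\<bar> (b n * (vnorm n w)\<^sup>2) \<delta>})
          \<longlongrightarrow> 0) sequentially"
proof -
  have Pw: "prob_space Pw" "sets Pw = sets borel"
    using Pw_D by (auto simp: distD_def)
  obtain a where "0 < a" and q: "0 < measure Pw {t. a \<le> \<bar>t\<bar>}"
    using Pw_D distD_mass_away_from_zero by blast
  define q where "q = measure Pw {t. a \<le> \<bar>t\<bar>}"
  define C where "C = 2 * (\<integral>x. x\<^sup>2 \<partial>Pxi) / (\<delta>\<^sup>2 * a\<^sup>2 * q)"
  have Pxi: "prob_space Pxi" "sets Pxi = sets borel" "integrable Pxi (\<lambda>x. x)" "integral\<^sup>L Pxi (\<lambda>x. x) = 0"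
    using Pxi_D by (auto simp: distD_def)
  have bound: "\<forall>\<^sub>F n in sequentially. measure (PiM {..<n} (\<lambda>_. Pw) \<Otimes>\<^sub>M PiM {..<n} (\<lambda>_. Pxi))
            {(w, xi) \<in> space (PiM {..<n} (\<lambda>_. Pw) \<Otimes>\<^sub>M PiM {..<n} (\<lambda>_. Pxi)).
              ratio_gt \<bar>bilin n w (M n) xi\<bar> (b n * (vnorm n w)\<^sup>2) \<delta>}
      \<le> 4 / (n * q\<^sup>2) + C / (n * (b n)\<^sup>2)"
    using b_nz eventually_gt_at_top[of 0]
  proof eventually_elim
    case (elim n)
    show ?case
      using measure_bilin_ratio_gt_le[OF Pw \<open>0 < a\<close> q Pxi(1-3) distD_integrable_square[OF Pxi_D]
          Pxi(4) M_op elim(1) delta_pos elim(2)]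
      unfolding C_def q_def .
  qed
  have "(\<lambda>n. 4 / q\<^sup>2 * (1 / n) + C * ((1 / sqrt n) / \<bar>b n\<bar>)\<^sup>2) \<longlonglongrightarrow> 4 / q\<^sup>2 * 0 + C * 0\<^sup>2"
    by (intro tendsto_intros lim_1_over_n b_omega)
  moreover have "4 / q\<^sup>2 * (1 / n) + C * ((1 / sqrt n) / \<bar>b n\<bar>)\<^sup>2 = 4 / (n * q\<^sup>2) + C / (n * (b n)\<^sup>2)"
    for n :: nat
    by (simp add: power_divide power_mult_distrib)
  ultimately have "(\<lambda>n. 4 / (n * q\<^sup>2) + C / (n * (b n)\<^sup>2)) \<longlonglongrightarrow> 0"
    by simp
  then show ?thesis
    by (intro tendsto_sandwich[OF _ bound tendsto_const]) (simp_all add: measure_nonneg)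
qed

end
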